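(* Let $p,q$ be positive integers with $\frac1p+\frac1q=\frac12$. Let $M$ be a $\{p,q\}$-map of radius $0$ (i.e., all vertices of $M$ are exterior) and perimeter $n>0$. Then $\mathrm{Area}(M)\le\frac{q(n-2)}{2p}$.
   Context: A map is a finite, connected, simply connected 2-complex embedded in the plane; $\mathrm{Area}$ = number of faces; perimeter = length of the boundary path; degree of a vertex = number of oriented edges starting there, degree of a face = length of its boundary path. A $(p,q)$-map: every interior face has degree $\ge p$, every interior vertex has degree $\ge q$. A $\{p,q\}$-map is a $(p,q)$-map in which every face has degree at least $p$ and less than $2p$ and every vertex has degree less than $2q$. The radius is the maximal distance from a vertex to the boundary. *)

theory Defs
  imports Complex_Main "HOL-Combinatorics.Orbits" "HOL-Combinatorics.Permutations"
begin

text \<open>A (planar) map is encoded combinatorially: a finite nonempty set D of darts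
(oriented edges), a fixed-point-free involution alpha (reversal of orientation),
a permutation sigma (rotation of the darts leaving a vertex, i.e. vertices are
sigma-orbits), faces are orbits of phi = sigma o alpha (boundary paths), and one
distinguished dart ext lies on the boundary path of the exterior region.
Connectedness: sigma and alpha act transitively; planarity (sphere): Euler
formula V - E + F = 2, where F counts the exterior region as well.\<close>

definition face_perm :: "('a \<Rightarrow> 'a) \<Rightarrow> ('a \<Rightarrow> 'a) \<Rightarrow> 'a \<Rightarrow> 'a" where
  "face_perm alpha sigma = sigma \<circ> alpha"

definition map_vertices :: "'a set \<Rightarrow> ('a \<Rightarrow> 'a) \<Rightarrow> 'a set set" where
  "map_vertices D sigma = (\<lambda>x. orbit sigma x) ` D"

definition map_faces_all :: "'a set \<Rightarrow> ('a \<Rightarrow> 'a) \<Rightarrow> ('a \<Rightarrow> 'a) \<Rightarrow> 'a set set" where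
  "map_faces_all D alpha sigma = (\<lambda>x. orbit (face_perm alpha sigma) x) ` D"

definition ext_face :: "('a \<Rightarrow> 'a) \<Rightarrow> ('a \<Rightarrow> 'a) \<Rightarrow> 'a \<Rightarrow> 'a set" where
  "ext_face alpha sigma ext = orbit (face_perm alpha sigma) ext"

definition map_faces :: "'a set \<Rightarrow> ('a \<Rightarrow> 'a) \<Rightarrow> ('a \<Rightarrow> 'a) \<Rightarrow> 'a \<Rightarrow> 'a set set" where
  "map_faces D alpha sigma ext = map_faces_all D alpha sigma - {ext_face alpha sigma ext}"

definition planar_map :: "'a set \<Rightarrow> ('a \<Rightarrow> 'a) \<Rightarrow> ('a \<Rightarrow> 'a) \<Rightarrow> 'a \<Rightarrow> bool" where
  "planar_map D alpha sigma ext \<longleftrightarrow>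
     finite D \<and> D \<noteq> {} \<and> alpha permutes D \<and> sigma permutes D \<and>
     (\<forall>x\<in>D. alpha x \<noteq> x \<and> alpha (alpha x) = x) \<and>
     (\<forall>x\<in>D. \<forall>y\<in>D. (x, y) \<in> ({(z, sigma z) | z. z \<in> D} \<union> {(z, alpha z) | z. z \<in> D})\<^sup>*) \<and>
     ext \<in> D \<and>
     card (map_vertices D sigma) + card (map_faces_all D alpha sigma) = card D div 2 + 2"

definition area :: "'a set \<Rightarrow> ('a \<Rightarrow> 'a) \<Rightarrow> ('a \<Rightarrow> 'a) \<Rightarrow> 'a \<Rightarrow> nat" where
  "area D alpha sigma ext = card (map_faces D alpha sigma ext)"

definition perimeter :: "('a \<Rightarrow> 'a) \<Rightarrow> ('a \<Rightarrow> 'a) \<Rightarrow> 'a \<Rightarrow> nat" where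
  "perimeter alpha sigma ext = card (ext_face alpha sigma ext)"

text \<open>Degree of a vertex v (a sigma-orbit) = number of darts starting at v = card v;
degree of a face f = length of its boundary path = card f.\<close>
definition exterior_vertex :: "('a \<Rightarrow> 'a) \<Rightarrow> ('a \<Rightarrow> 'a) \<Rightarrow> 'a \<Rightarrow> 'a set \<Rightarrow> bool" where
  "exterior_vertex alpha sigma ext v \<longleftrightarrow> v \<inter> ext_face alpha sigma ext \<noteq> {}"

definition interior_vertices :: "'a set \<Rightarrow> ('a \<Rightarrow> 'a) \<Rightarrow> ('a \<Rightarrow> 'a) \<Rightarrow> 'a \<Rightarrow> 'a set set" where
  "interior_vertices D alpha sigma ext =
     {v \<in> map_vertices D sigma. \<not> exterior_vertex alpha sigma ext v}"

definition radius_zero :: "'a set \<Rightarrow> ('a \<Rightarrow> 'a) \<Rightarrow> ('a \<Rightarrow> 'a) \<Rightarrow> 'a \<Rightarrow> bool" where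
  "radius_zero D alpha sigma ext \<longleftrightarrow>
     (\<forall>v \<in> map_vertices D sigma. exterior_vertex alpha sigma ext v)"

definition pq_map :: "nat \<Rightarrow> nat \<Rightarrow> 'a set \<Rightarrow> ('a \<Rightarrow> 'a) \<Rightarrow> ('a \<Rightarrow> 'a) \<Rightarrow> 'a \<Rightarrow> bool" where
  "pq_map p q D alpha sigma ext \<longleftrightarrow>
     planar_map D alpha sigma ext \<and>
     (\<forall>f \<in> map_faces D alpha sigma ext. card f \<ge> p) \<and>
     (\<forall>v \<in> interior_vertices D alpha sigma ext. card v \<ge> q)"

definition curly_pq_map :: "nat \<Rightarrow> nat \<Rightarrow> 'a set \<Rightarrow> ('a \<Rightarrow> 'a) \<Rightarrow> ('a \<Rightarrow> 'a) \<Rightarrow> 'a \<Rightarrow> bool" where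
  "curly_pq_map p q D alpha sigma ext \<longleftrightarrow>
     pq_map p q D alpha sigma ext \<and>
     (\<forall>f \<in> map_faces D alpha sigma ext. p \<le> card f \<and> card f < 2 * p) \<and>
     (\<forall>v \<in> map_vertices D sigma. card v < 2 * q)"

end

theory Submission
  imports Defs
begin

text \<open>Count darts. Every interior face has degree at least \<open>p\<close> and the exterior face has
degree \<open>n\<close>, so there are at least \<open>p A + n\<close> darts. Since every vertex is exterior, the
vertices inject into the darts of the exterior boundary, so \<open>V \<le> n\<close>; Euler's formula
\<open>V + (A + 1) = |D|/2 + 2\<close> then bounds the darts by \<open>2 (n + A - 1)\<close>. Hence
\<open>(p - 2) A \<le> n - 2\<close>, and \<open>1/p + 1/q = 1/2\<close> means exactly \<open>q (p - 2) = 2 p\<close>.\<close>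

lemma card_eq_sum_card_partition:
  assumes "finite S" "\<Union>P = S" "pairwise disjnt P"
  shows "card S = (\<Sum>X\<in>P. card X)"
proof -
  have "\<forall>X\<in>P. finite X" using assms(1,2) by (meson Sup_upper finite_subset)
  then show ?thesis using card_Union_disjoint[OF assms(3)] assms(2) by simp
qed

lemma card_le_if_blocks_meet:
  assumes "finite E" "pairwise disjnt P" "\<And>X. X \<in> P \<Longrightarrow> X \<inter> E \<noteq> {}"
  shows "card P \<le> card E"
proof -
  define pick where "pick X = (SOME e. e \<in> X \<inter> E)" for X
  have pick: "pick X \<in> X \<inter> E" if "X \<in> P" for X
    using assms(3)[OF that] unfolding pick_def by (meson all_not_in_conv someI_ex)
  have "inj_on pick P"
    using pick assms(2) by (intro inj_onI) (metis IntD1 disjnt_iff pairwiseD)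
  moreover have "pick ` P \<subseteq> E" using pick by blast
  ultimately show ?thesis using card_inj_on_le[OF _ _ assms(1)] by blast
qed

lemma even_card_if_fixpoint_free_involution:
  assumes "finite S" "\<And>x. x \<in> S \<Longrightarrow> g x \<in> S \<and> g x \<noteq> x \<and> g (g x) = x"
  shows "even (card S)"
proof -
  let ?P = "(\<lambda>x. {x, g x}) ` S"
  have pair_eq: "{w, g w} = {x, g x}" if "x \<in> S" "w \<in> {x, g x}" for x w
    using that assms(2)[OF \<open>x \<in> S\<close>] by auto
  have "\<Union>?P = S" using assms(2) by auto
  moreover have "pairwise disjnt ?P"
  proof (rule pairwiseI)
    fix A B assume "A \<in> ?P" "B \<in> ?P" "A \<noteq> B"
    then obtain x y where xy: "x \<in> S" "y \<in> S" "A = {x, g x}" "B = {y, g y}" by blast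
    show "disjnt A B"
      unfolding disjnt_iff
    proof (intro allI notI)
      fix w assume "w \<in> A \<and> w \<in> B"
      then have "A = {w, g w}" "B = {w, g w}"
        using pair_eq[OF xy(1), of w] pair_eq[OF xy(2), of w] xy(3,4) by simp_all
      with \<open>A \<noteq> B\<close> show False by simp
    qed
  qed
  ultimately have "card S = (\<Sum>X\<in>?P. card X)"
    by (rule card_eq_sum_card_partition[OF assms(1)])
  also have "\<dots> = (\<Sum>X\<in>?P. 2)" by (intro sum.cong) (auto dest: assms(2))
  finally show ?thesis by simp
qed

lemma orbits_partition:
  assumes "f permutes S" "finite S"
  shows "\<Union>((\<lambda>x. orbit f x) ` S) = S"
    and "pairwise disjnt ((\<lambda>x. orbit f x) ` S)"
proof -
  have self: "x \<in> orbit f x" for x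
    using assms by (intro permutation_self_in_orbit) (auto simp: permutation_permutes)
  show "\<Union>((\<lambda>x. orbit f x) ` S) = S"
    using self permutes_orbit_subset[OF assms(1)] by blast
  have "orbit f z = orbit f x" if "z \<in> orbit f x" for x z
    using orbit_cyclic_eq3[OF cyclic_on_orbit[OF assms] that] .
  then show "pairwise disjnt ((\<lambda>x. orbit f x) ` S)"
    unfolding pairwise_def disjnt_def by blast
qed

context
  fixes D :: "'a set" and alpha sigma :: "'a \<Rightarrow> 'a" and ext :: 'a
  assumes map: "planar_map D alpha sigma ext"
begin

lemma face_perm_permutes: "face_perm alpha sigma permutes D"
  using map unfolding planar_map_def face_perm_def by (blast intro: permutes_compose)

lemma ext_face_in_faces: "ext_face alpha sigma ext \<in> map_faces_all D alpha sigma"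
  using map unfolding planar_map_def ext_face_def map_faces_all_def by blast

lemma card_faces_all: "card (map_faces_all D alpha sigma) = area D alpha sigma ext + 1"
proof -
  have "finite (map_faces_all D alpha sigma)"
    using map unfolding planar_map_def map_faces_all_def by simp
  then show ?thesis using ext_face_in_faces
    unfolding area_def map_faces_def by (simp add: card_Suc_Diff1 del: card_Diff_insert)
qed

lemma even_card_darts: "even (card D)"
  using map unfolding planar_map_def
  by (intro even_card_if_fixpoint_free_involution[of D alpha]) (auto simp: permutes_in_image)

lemma darts_ge_face_degrees:
  assumes "\<forall>f \<in> map_faces D alpha sigma ext. p \<le> card f"
  shows "p * area D alpha sigma ext + perimeter alpha sigma ext \<le> card D"
proof -
  let ?F = "map_faces_all D alpha sigma" and ?E = "ext_face alpha sigma ext"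
  have fin: "finite D" using map unfolding planar_map_def by simp
  have "card D = (\<Sum>X\<in>?F. card X)"
    using orbits_partition[OF face_perm_permutes fin] card_eq_sum_card_partition[OF fin]
    unfolding map_faces_all_def by blast
  also have "\<dots> = card ?E + (\<Sum>X\<in>?F - {?E}. card X)"
    using ext_face_in_faces fin by (simp add: map_faces_all_def sum.remove)
  finally show ?thesis
    using sum_bounded_below[of "?F - {?E}" p card] assms
    unfolding area_def perimeter_def map_faces_def by (simp add: mult.commute)
qed

lemma radius_zero_card_vertices_le_perimeter:
  assumes "radius_zero D alpha sigma ext"
  shows "card (map_vertices D sigma) \<le> perimeter alpha sigma ext"
proof -
  have fin: "finite D" and sp: "sigma permutes D" using map unfolding planar_map_def by auto
  have "finite (ext_face alpha sigma ext)"
    using fin permutes_orbit_subset[OF face_perm_permutes] map finite_subset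
    unfolding ext_face_def planar_map_def by metis
  then show ?thesis
    using card_le_if_blocks_meet orbits_partition(2)[OF sp fin] assms
    unfolding perimeter_def radius_zero_def exterior_vertex_def map_vertices_def by metis
qed

lemma radius_zero_area_perimeter_bound:
  assumes "\<forall>f \<in> map_faces D alpha sigma ext. p \<le> card f" "radius_zero D alpha sigma ext"
  shows "p * area D alpha sigma ext + 2 \<le> perimeter alpha sigma ext + 2 * area D alpha sigma ext"
proof -
  have "card (map_vertices D sigma) + card (map_faces_all D alpha sigma) = card D div 2 + 2"
    using map unfolding planar_map_def by blast
  then show ?thesis
    using darts_ge_face_degrees[OF assms(1)] radius_zero_card_vertices_le_perimeter[OF assms(2)]
      card_faces_all even_card_darts
    by (auto elim!: evenE)
qed

end

theorem lemma2p11: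
  fixes p q :: nat and D :: "'a set" and alpha sigma :: "'a \<Rightarrow> 'a" and ext :: 'a
  assumes "p > 0" and "q > 0"
    and "1 / real p + 1 / real q = 1 / 2"
    and "curly_pq_map p q D alpha sigma ext"
    and "radius_zero D alpha sigma ext"
    and "perimeter alpha sigma ext > 0"
  shows "real (area D alpha sigma ext)
           \<le> real q * (real (perimeter alpha sigma ext) - 2) / (2 * real p)"
proof -
  define A where "A = area D alpha sigma ext"
  define n where "n = perimeter alpha sigma ext"
  have map: "planar_map D alpha sigma ext"
    and faces: "\<forall>f \<in> map_faces D alpha sigma ext. p \<le> card f"
    using assms(4) unfolding curly_pq_map_def pq_map_def by auto
  have "p * A + 2 \<le> n + 2 * A"
    unfolding A_def n_def by (rule radius_zero_area_perimeter_bound[OF map faces assms(5)])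
  then have count: "(real p - 2) * A \<le> real n - 2"
    by (simp add: algebra_simps flip: of_nat_add of_nat_mult of_nat_le_iff)
  have pq: "real q * (real p - 2) = 2 * real p" using assms(1-3) by (simp add: field_simps)
  have "2 * real p * A = real q * ((real p - 2) * A)" using pq by (simp add: algebra_simps)
  also have "\<dots> \<le> real q * (real n - 2)" using count by (simp add: mult_left_mono)
  finally show ?thesis
    using assms(1) unfolding A_def n_def by (simp add: pos_le_divide_eq mult.commute)
qed

end
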